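(* Let $n\ge3$, $\ell>0$, $\alpha\ge(n-2)\ell$, $S=\alpha I_n+\ell\mathbf{1}_n\mathbf{1}_n^\top$. For every signless Laplacian $P$, $$\Big\|\lim_{t\to\infty}(S+tP)^{-1}\Big\|_\infty\le\|S^{-1}\|_\infty=\frac1\alpha+\frac{\ell(n-2)}{\alpha(\alpha+\ell n)},$$ with equality if and only if $P=0$.
   Context: For a real matrix $P$, $\Delta_i(P)=|P_{ii}|-\sum_{j\ne i}|P_{ij}|$. A signless Laplacian is a real symmetric $n\times n$ matrix $P$ with $P_{ij}\in\{0,1\}$ for $i\ne j$, $P_{ii}\ge0$, and $\Delta_i(P)\in\{0,2\}$ for all $i$. (The limit exists.) $\|A\|_\infty$ is the maximum absolute row sum. *)

theory Defs
  imports "HOL-Analysis.Analysis"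
begin

definition row_dom :: "real^'n^'n \<Rightarrow> 'n \<Rightarrow> real" where
  "row_dom P i = \<bar>P $ i $ i\<bar> - (\<Sum>j\<in>UNIV - {i}. \<bar>P $ i $ j\<bar>)"

definition signless_laplacian :: "real^'n^'n \<Rightarrow> bool" where
  "signless_laplacian P \<longleftrightarrow>
     transpose P = P \<and>
     (\<forall>i j. i \<noteq> j \<longrightarrow> P $ i $ j \<in> {0, 1}) \<and>
     (\<forall>i. P $ i $ i \<ge> 0) \<and>
     (\<forall>i. row_dom P i \<in> {0, 2})"

definition inf_norm :: "real^'n^'n \<Rightarrow> real" where
  "inf_norm A = Max (range (\<lambda>i. \<Sum>j\<in>UNIV. \<bar>A $ i $ j\<bar>))"

definition ones_mat :: "real^'n^'n" where
  "ones_mat = (\<chi> i j. 1)"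

end

theory Submission
  imports Defs
begin

text \<open>
  Proof of Corollary 4.11.  Write \<open>M\<^sub>t = S + t P\<close> with \<open>S = \<alpha> I + l \<one>\<one>\<^sup>T\<close>.

  \<^item> A signless Laplacian is positive semidefinite: \<open>x\<^sup>T P x\<close> is a sum of the squares \<open>\<Delta>\<^sub>i x\<^sub>i\<^sup>2\<close> and
    \<open>(x\<^sub>i + x\<^sub>k)\<^sup>2\<close> over edges; its null space is described combinatorially and is closed under
    applying odd functions coordinatewise.
  \<^item> The energy identity \<open>x\<^sup>T M\<^sub>t x = \<alpha>|x|\<^sup>2 + l(\<Sum>x)\<^sup>2 + t x\<^sup>T P x\<close> shows that \<open>M\<^sub>t\<close> (\<open>t \<ge> 0\<close>) is
    invertible, that the columns of \<open>M\<^sub>t\<^sup>-\<^sup>1\<close> are bounded by \<open>1/\<alpha>\<close> and that \<open>t x\<^sup>T P x \<le> 1/\<alpha>\<close>.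
  \<^item> Every cluster point of the \<open>j\<close>-th column as \<open>t \<rightarrow> \<infinity>\<close> is a null vector \<open>z\<close> of \<open>P\<close> with
    \<open>\<alpha>\<langle>w,z\<rangle> + l(\<Sum>z)(\<Sum>w) = w\<^sub>j\<close> for all null vectors \<open>w\<close> (a "reduced solution"); these
    equations have at most one solution, so by compactness \<open>M\<^sub>t\<^sup>-\<^sup>1\<close> converges to a symmetric
    limit \<open>L\<close> whose columns are the reduced solutions.
  \<^item> Testing the reduced equations with odd functions of \<open>z\<close> itself (signs and identity on the
    level set \<open>|z\<^sub>i| = z\<^sub>j\<close> and its complement) reduces the bound \<open>\<Sum>|z\<^sub>i| < \<parallel>S\<^sup>-\<^sup>1\<parallel>\<^sub>\<infinity>\<close> for
    \<open>P \<noteq> 0\<close> to two polynomial inequalities in a handful of real parameters.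
  \<^item> Finally \<open>S\<^sup>-\<^sup>1 = I/\<alpha> - l/(\<alpha>(\<alpha> + l n)) \<one>\<one>\<^sup>T\<close> is computed explicitly, and for \<open>P = 0\<close> the
    limit is \<open>S\<^sup>-\<^sup>1\<close> itself.
\<close>

lemma sl_symmetric: "signless_laplacian P \<Longrightarrow> P $ k $ i = P $ i $ k"
  unfolding signless_laplacian_def by (metis transpose_def vec_lambda_beta)

lemma sl_offdiag: "signless_laplacian P \<Longrightarrow> i \<noteq> k \<Longrightarrow> P $ i $ k = 0 \<or> P $ i $ k = 1"
  unfolding signless_laplacian_def by auto

lemma sl_row_dom: "signless_laplacian P \<Longrightarrow> row_dom P i = 0 \<or> row_dom P i = 2"
  unfolding signless_laplacian_def by auto

definition adj :: "real^'n^'n \<Rightarrow> 'n \<Rightarrow> 'n \<Rightarrow> real" where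
  "adj P i k = (if k = i then 0 else P $ i $ k)"

lemma sum_adj_remove: "(\<Sum>k\<in>UNIV. adj P i k) = (\<Sum>k\<in>UNIV - {i}. adj P i k)"
  using sum.remove[of UNIV i "adj P i"] by (simp add: adj_def)

lemma adj_nonneg: "signless_laplacian P \<Longrightarrow> adj P i k \<ge> 0"
  using sl_offdiag[of P i k] unfolding adj_def by auto

lemma adj_sym: "signless_laplacian P \<Longrightarrow> adj P k i = adj P i k"
  using sl_symmetric[of P k i] unfolding adj_def by auto

lemma sl_diag:
  assumes sl: "signless_laplacian P"
  shows "P $ i $ i = (\<Sum>k\<in>UNIV. adj P i k) + row_dom P i"
proof -
  have "(\<Sum>k\<in>UNIV - {i}. \<bar>P $ i $ k\<bar>) = (\<Sum>k\<in>UNIV - {i}. adj P i k)"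
  proof (rule sum.cong)
    fix k assume "k \<in> UNIV - {i}"
    then show "\<bar>P $ i $ k\<bar> = adj P i k"
      using sl_offdiag[OF sl, of i k] by (auto simp: adj_def)
  qed simp
  also have "\<dots> = (\<Sum>k\<in>UNIV. adj P i k)"
    by (rule sum_adj_remove[symmetric])
  finally show ?thesis
    using sl unfolding row_dom_def signless_laplacian_def by auto
qed

subsection \<open>The quadratic form of a signless Laplacian and its null space\<close>

definition quad_form :: "real^'n^'n \<Rightarrow> real^'n \<Rightarrow> real" where
  "quad_form P x = (\<Sum>i\<in>UNIV. x $ i * (\<Sum>k\<in>UNIV. P $ i $ k * x $ k))"

lemma quad_form_sos:
  assumes sl: "signless_laplacian P"
  shows "quad_form P x = (\<Sum>i\<in>UNIV. row_dom P i * (x $ i)\<^sup>2)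
      + (1/2) * (\<Sum>i\<in>UNIV. \<Sum>k\<in>UNIV. adj P i k * (x $ i + x $ k)\<^sup>2)"
proof -
  have row: "x $ i * (\<Sum>k\<in>UNIV. P $ i $ k * x $ k)
      = row_dom P i * (x $ i)\<^sup>2 + (\<Sum>k\<in>UNIV. adj P i k * (x $ i)\<^sup>2)
        + (\<Sum>k\<in>UNIV. adj P i k * x $ i * x $ k)" for i
  proof -
    have "(\<Sum>k\<in>UNIV. P $ i $ k * x $ k)
        = (\<Sum>k\<in>UNIV. adj P i k * x $ k + (if k = i then P $ i $ i * x $ k else 0))"
      by (intro sum.cong) (auto simp: adj_def)
    then have "x $ i * (\<Sum>k\<in>UNIV. P $ i $ k * x $ k)
        = (\<Sum>k\<in>UNIV. adj P i k * x $ i * x $ k) + P $ i $ i * (x $ i)\<^sup>2"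
      by (simp add: sum.distrib algebra_simps sum_distrib_left power2_eq_square)
    then show ?thesis
      by (simp add: sl_diag[OF sl, of i] distrib_right sum_distrib_right)
  qed
  have swap: "(\<Sum>i\<in>UNIV. \<Sum>k\<in>UNIV. adj P i k * (x $ k)\<^sup>2)
      = (\<Sum>i\<in>UNIV. \<Sum>k\<in>UNIV. adj P i k * (x $ i)\<^sup>2)"
    by (subst sum.swap) (simp add: adj_sym[OF sl])
  have "(\<Sum>i\<in>UNIV. \<Sum>k\<in>UNIV. adj P i k * (x $ i + x $ k)\<^sup>2)
     = (\<Sum>i\<in>UNIV. \<Sum>k\<in>UNIV. adj P i k * (x $ i)\<^sup>2)
       + 2 * (\<Sum>i\<in>UNIV. \<Sum>k\<in>UNIV. adj P i k * x $ i * x $ k)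
       + (\<Sum>i\<in>UNIV. \<Sum>k\<in>UNIV. adj P i k * (x $ k)\<^sup>2)"
    by (simp add: power2_sum algebra_simps sum.distrib sum_distrib_left)
  then show ?thesis
    unfolding quad_form_def row sum.distrib using swap by simp
qed

lemma quad_form_nonneg:
  assumes sl: "signless_laplacian P"
  shows "quad_form P x \<ge> 0"
proof -
  have "row_dom P i \<ge> 0" for i
    using sl_row_dom[OF sl, of i] by auto
  then show ?thesis
    unfolding quad_form_sos[OF sl]
    by (intro add_nonneg_nonneg mult_nonneg_nonneg sum_nonneg adj_nonneg[OF sl]) auto
qed

text \<open>The null space of \<open>P\<close>, described combinatorially: vectors that change sign across
  every edge and vanish at every vertex with \<open>\<Delta>\<^sub>i(P) = 2\<close>.\<close>
definition sl_kernel :: "real^'n^'n \<Rightarrow> (real^'n) set" where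
  "sl_kernel P = {x. (\<forall>i k. i \<noteq> k \<and> P $ i $ k = 1 \<longrightarrow> x $ k = - x $ i) \<and>
                      (\<forall>i. row_dom P i = 2 \<longrightarrow> x $ i = 0)}"

lemma quad_form_zero_imp_kernel:
  assumes sl: "signless_laplacian P" and q: "quad_form P x = 0"
  shows "x \<in> sl_kernel P"
proof -
  have dom_nonneg: "row_dom P i \<ge> 0" for i
    using sl_row_dom[OF sl, of i] by auto
  have vertex_terms: "(\<Sum>i\<in>UNIV. row_dom P i * (x $ i)\<^sup>2) \<ge> 0"
    using dom_nonneg by (intro sum_nonneg) auto
  have edge_terms: "(\<Sum>i\<in>UNIV. \<Sum>k\<in>UNIV. adj P i k * (x $ i + x $ k)\<^sup>2) \<ge> 0"
    by (intro sum_nonneg mult_nonneg_nonneg adj_nonneg[OF sl]) auto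
  have "(\<Sum>i\<in>UNIV. row_dom P i * (x $ i)\<^sup>2) = 0"
    and "(\<Sum>i\<in>UNIV. \<Sum>k\<in>UNIV. adj P i k * (x $ i + x $ k)\<^sup>2) = 0"
    using vertex_terms edge_terms q unfolding quad_form_sos[OF sl] by linarith+
  then have vertex: "row_dom P i * (x $ i)\<^sup>2 = 0"
    and edge: "adj P i k * (x $ i + x $ k)\<^sup>2 = 0" for i k
    using dom_nonneg
    by (simp_all add: sum_nonneg_eq_0_iff sum_nonneg adj_nonneg[OF sl])
  show ?thesis
    unfolding sl_kernel_def
  proof (intro CollectI conjI allI impI)
    fix i k assume "i \<noteq> k \<and> P $ i $ k = 1"
    then have "(x $ i + x $ k)\<^sup>2 = 0"
      using edge[of i k] by (auto simp: adj_def)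
    then show "x $ k = - x $ i" by simp
  next
    fix i assume "row_dom P i = 2"
    then show "x $ i = 0" using vertex[of i] by simp
  qed
qed

lemma sl_kernel_diff: "x \<in> sl_kernel P \<Longrightarrow> y \<in> sl_kernel P \<Longrightarrow> x - y \<in> sl_kernel P"
  unfolding sl_kernel_def by auto

text \<open>The null space is closed under applying an odd function to every coordinate.
  This is what lets us test the limit equations against many auxiliary vectors.\<close>
lemma sl_kernel_odd_map:
  assumes "x \<in> sl_kernel P" and odd: "\<And>y. \<phi> (- y) = - \<phi> y"
  shows "(\<chi> i. \<phi> (x $ i)) \<in> sl_kernel P"
proof -
  have "\<phi> 0 = 0" using odd[of 0] by simp
  then show ?thesis using assms unfolding sl_kernel_def by auto
qed

lemma sl_kernel_mult:
  assumes sl: "signless_laplacian P" and x: "x \<in> sl_kernel P"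
  shows "(\<Sum>k\<in>UNIV. P $ i $ k * x $ k) = 0"
proof -
  have edge: "P $ i $ k * x $ k = - (adj P i k * x $ i)" if "k \<noteq> i" for k
    using sl_offdiag[OF sl, of i k] that x unfolding sl_kernel_def adj_def by auto
  have "(\<Sum>k\<in>UNIV. P $ i $ k * x $ k) = P $ i $ i * x $ i + (\<Sum>k\<in>UNIV - {i}. P $ i $ k * x $ k)"
    by (subst sum.remove[of UNIV i]) auto
  also have "(\<Sum>k\<in>UNIV - {i}. P $ i $ k * x $ k) = - (\<Sum>k\<in>UNIV - {i}. adj P i k) * x $ i"
    using edge by (simp add: sum_negf sum_distrib_right)
  also have "(\<Sum>k\<in>UNIV - {i}. adj P i k) = (\<Sum>k\<in>UNIV. adj P i k)"
    by (rule sum_adj_remove[symmetric])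
  finally have "(\<Sum>k\<in>UNIV. P $ i $ k * x $ k) = row_dom P i * x $ i"
    by (simp add: sl_diag[OF sl, of i] algebra_simps)
  moreover have "row_dom P i * x $ i = 0"
    using sl_row_dom[OF sl, of i] x unfolding sl_kernel_def by auto
  ultimately show ?thesis by simp
qed

text \<open>If \<open>P \<noteq> 0\<close>, every null vector has a zero coordinate or two opposite coordinates.
  This is where the strictness of the final inequality comes from.\<close>
lemma sl_kernel_nonzero_witness:
  assumes sl: "signless_laplacian P" and P0: "P \<noteq> 0" and z: "z \<in> sl_kernel P"
  shows "(\<exists>i. z $ i = 0) \<or> (\<exists>i k. i \<noteq> k \<and> z $ k = - z $ i)"
proof -
  obtain i k where ik: "P $ i $ k \<noteq> 0"
    using P0 by (metis vec_eq_iff zero_index)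
  have edge: "z $ k' = - z $ i'" if "i' \<noteq> k'" "P $ i' $ k' \<noteq> 0" for i' k'
    using sl_offdiag[OF sl that(1)] that z unfolding sl_kernel_def by auto
  consider "i \<noteq> k" | "i = k" "row_dom P i = 2" | "i = k" "row_dom P i = 0"
    using sl_row_dom[OF sl, of i] by blast
  then show ?thesis
  proof cases
    case 1
    then show ?thesis using edge ik by blast
  next
    case 2
    then show ?thesis using z unfolding sl_kernel_def by blast
  next
    case 3
    then have "(\<Sum>k\<in>UNIV. adj P i k) \<noteq> 0"
      using sl_diag[OF sl, of i] ik by simp
    then obtain k' where "adj P i k' \<noteq> 0"
      by (meson sum.neutral)
    then have "i \<noteq> k'" "P $ i $ k' \<noteq> 0"
      unfolding adj_def by (auto split: if_splits)
    then show ?thesis using edge by blast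
  qed
qed

lemma matrix_inv_eqI:
  fixes A B :: "'a::field^'n^'n"
  assumes AB: "A ** B = mat 1"
  shows "matrix_inv A = B"
proof -
  have "A ** B = mat 1 \<and> B ** A = mat 1"
    using AB matrix_left_right_inverse by blast
  then have inv: "A ** matrix_inv A = mat 1 \<and> matrix_inv A ** A = mat 1"
    unfolding matrix_inv_def by (rule someI)
  have "matrix_inv A = (B ** A) ** matrix_inv A"
    using AB matrix_left_right_inverse by (metis matrix_mul_lid)
  also have "\<dots> = B"
    using inv by (simp add: matrix_mul_assoc[symmetric] matrix_mul_rid)
  finally show ?thesis .
qed

lemma matrix_inv_of_trivial_kernel:
  fixes M :: "real^'n^'n"
  assumes ker: "\<And>x. M *v x = 0 \<Longrightarrow> x = 0"
  shows "M ** matrix_inv M = mat 1"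
proof -
  have "inj ((*v) M)"
  proof (rule injI)
    fix x y assume "M *v x = M *v y"
    then have "M *v (x - y) = 0" by (simp add: matrix_vector_mult_diff_distrib)
    then show "x = y" using ker[of "x - y"] by simp
  qed
  then obtain B where "B ** M = mat 1"
    using matrix_left_invertible_injective by blast
  then have "M ** B = mat 1"
    using matrix_left_right_inverse by blast
  then show ?thesis using matrix_inv_eqI by metis
qed

subsection \<open>The pencil \<open>S + t P\<close>\<close>

definition pencil :: "real \<Rightarrow> real \<Rightarrow> real \<Rightarrow> real^'n^'n \<Rightarrow> real^'n^'n" where
  "pencil \<alpha> l t P = \<alpha> *\<^sub>R mat 1 + l *\<^sub>R ones_mat + t *\<^sub>R P"

lemma pencil_mult_vec:
  "(pencil \<alpha> l t P *v x) $ i = \<alpha> * x $ i + l * (\<Sum>k\<in>UNIV. x $ k) + t * (\<Sum>k\<in>UNIV. P $ i $ k * x $ k)"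
proof -
  have "(pencil \<alpha> l t P *v x) $ i
      = (\<Sum>k\<in>UNIV. (if i = k then \<alpha> * x $ k else 0) + l * x $ k + t * (P $ i $ k * x $ k))"
    unfolding pencil_def matrix_vector_mult_def
    by (auto intro!: sum.cong simp: mat_def ones_mat_def algebra_simps)
  then show ?thesis
    by (simp add: sum.distrib sum_distrib_left)
qed

lemma pencil_energy:
  "(\<Sum>i\<in>UNIV. x $ i * (pencil \<alpha> l t P *v x) $ i)
     = \<alpha> * (norm x)\<^sup>2 + l * (\<Sum>k\<in>UNIV. x $ k)\<^sup>2 + t * quad_form P x"
proof -
  have "(norm x)\<^sup>2 = (\<Sum>i\<in>UNIV. x $ i * x $ i)"
    by (simp add: power2_norm_eq_inner inner_vec_def)
  then show ?thesis
    unfolding pencil_mult_vec quad_form_def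
    by (simp add: algebra_simps sum.distrib sum_distrib_left sum_distrib_right power2_eq_square)
qed

text \<open>By the energy identity \<open>M\<^sub>t\<close> has trivial kernel for \<open>\<alpha> > 0\<close>, \<open>l, t \<ge> 0\<close>.\<close>
lemma pencil_inverse:
  assumes sl: "signless_laplacian P" and a: "\<alpha> > 0" and l: "l \<ge> 0" and t: "t \<ge> 0"
  shows "pencil \<alpha> l t P ** matrix_inv (pencil \<alpha> l t P) = mat 1"
proof (rule matrix_inv_of_trivial_kernel)
  fix x assume "pencil \<alpha> l t P *v x = 0"
  then have "\<alpha> * (norm x)\<^sup>2 + l * (\<Sum>k\<in>UNIV. x $ k)\<^sup>2 + t * quad_form P x = 0"
    using pencil_energy[of x \<alpha> l t P] by simp
  moreover have "l * (\<Sum>k\<in>UNIV. x $ k)\<^sup>2 \<ge> 0" "t * quad_form P x \<ge> 0"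
    using l t quad_form_nonneg[OF sl] by auto
  ultimately have "\<alpha> * (norm x)\<^sup>2 \<le> 0" by linarith
  then show "x = 0" using a by (simp add: mult_le_0_iff)
qed

lemma pencil_column_bounds:
  assumes sl: "signless_laplacian P" and a: "\<alpha> > 0" and l: "l \<ge> 0" and t: "t \<ge> 0"
    and eq: "pencil \<alpha> l t P *v x = axis j 1"
  shows "norm x \<le> 1 / \<alpha>" and "t * quad_form P x \<le> 1 / \<alpha>"
proof -
  have "x $ j = \<alpha> * (norm x)\<^sup>2 + l * (\<Sum>k\<in>UNIV. x $ k)\<^sup>2 + t * quad_form P x"
    using pencil_energy[of x \<alpha> l t P] unfolding eq by (simp add: axis_def if_distrib cong: if_cong)
  moreover have "x $ j \<le> norm x"
    using component_le_norm_cart[of x j] by simp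
  moreover have "l * (\<Sum>k\<in>UNIV. x $ k)\<^sup>2 \<ge> 0" "t * quad_form P x \<ge> 0"
    using l t quad_form_nonneg[OF sl] by auto
  ultimately have energy: "\<alpha> * (norm x)\<^sup>2 + t * quad_form P x \<le> norm x" by linarith
  have "\<alpha> * norm x \<le> 1"
  proof (cases "norm x = 0")
    case False
    have "(\<alpha> * norm x) * norm x \<le> 1 * norm x"
      using energy \<open>t * quad_form P x \<ge> 0\<close> by (simp add: power2_eq_square mult.assoc)
    then show ?thesis using False by (simp add: mult_right_le_imp_le)
  qed simp
  then show nx: "norm x \<le> 1 / \<alpha>" using a by (simp add: field_simps)
  have "\<alpha> * (norm x)\<^sup>2 \<ge> 0" using a by simp
  then show "t * quad_form P x \<le> 1 / \<alpha>"
    using energy nx by linarith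
qed

text \<open>Testing \<open>M\<^sub>t x = e\<^sub>j\<close> against a null vector \<open>w\<close> removes the \<open>t\<close>-dependence, because
  \<open>\<langle>w, P x\<rangle> = \<langle>P w, x\<rangle> = 0\<close>.\<close>
lemma pencil_column_kernel_eq:
  assumes sl: "signless_laplacian P" and eq: "pencil \<alpha> l t P *v x = axis j 1"
    and w: "w \<in> sl_kernel P"
  shows "\<alpha> * (\<Sum>i\<in>UNIV. w $ i * x $ i) + l * (\<Sum>i\<in>UNIV. x $ i) * (\<Sum>i\<in>UNIV. w $ i) = w $ j"
proof -
  have Pw: "(\<Sum>i\<in>UNIV. w $ i * (\<Sum>k\<in>UNIV. P $ i $ k * x $ k)) = 0"
  proof -
    have "(\<Sum>i\<in>UNIV. w $ i * (\<Sum>k\<in>UNIV. P $ i $ k * x $ k))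
        = (\<Sum>k\<in>UNIV. x $ k * (\<Sum>i\<in>UNIV. P $ k $ i * w $ i))"
      unfolding sum_distrib_left
      by (subst sum.swap) (simp add: sl_symmetric[OF sl] mult_ac)
    also have "\<dots> = 0"
      using sl_kernel_mult[OF sl w] by simp
    finally show ?thesis .
  qed
  have "w $ j = (\<Sum>i\<in>UNIV. w $ i * (pencil \<alpha> l t P *v x) $ i)"
    unfolding eq by (simp add: axis_def if_distrib cong: if_cong)
  also have "\<dots> = \<alpha> * (\<Sum>i\<in>UNIV. w $ i * x $ i) + l * (\<Sum>i\<in>UNIV. x $ i) * (\<Sum>i\<in>UNIV. w $ i)
      + t * (\<Sum>i\<in>UNIV. w $ i * (\<Sum>k\<in>UNIV. P $ i $ k * x $ k))"
    unfolding pencil_mult_vec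
    by (simp add: algebra_simps sum.distrib sum_distrib_left sum_distrib_right) (rule sum.swap)
  finally show ?thesis using Pw by simp
qed

subsection \<open>A compactness criterion for limits at infinity\<close>

lemma tendsto_at_top_unique_cluster:
  fixes f :: "real \<Rightarrow> 'a::heine_borel"
  assumes bnd: "bounded (range f)"
    and cluster: "\<And>r y. filterlim r at_top sequentially \<Longrightarrow> (\<lambda>k. f (r k)) \<longlonglongrightarrow> y \<Longrightarrow> Q y"
    and unique: "\<And>y y'. Q y \<Longrightarrow> Q y' \<Longrightarrow> y = y'"
  shows "\<exists>z. Q z \<and> (f \<longlongrightarrow> z) at_top"
proof -
  have subseq_at_top: "filterlim (\<lambda>k. r (\<rho> k)) at_top sequentially"
    if "filterlim r at_top sequentially" "strict_mono \<rho>" for r :: "nat \<Rightarrow> real" and \<rho>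
    using filterlim_compose[OF that(1) filterlim_subseq[OF that(2)]] by (simp add: o_def)
  have bnd_seq: "bounded (range (\<lambda>k. f (r k)))" for r
    using bnd by (rule bounded_subset) auto
  obtain z \<rho> where \<rho>: "strict_mono \<rho>" and z: "((\<lambda>k. f (real k)) \<circ> \<rho>) \<longlonglongrightarrow> z"
    using bounded_imp_convergent_subsequence[OF bnd_seq] by blast
  have Qz: "Q z"
    using cluster[OF subseq_at_top[OF filterlim_real_sequentially \<rho>]] z by (simp add: o_def)
  have "(f \<longlongrightarrow> z) at_top"
  proof (rule ccontr)
    assume "\<not> (f \<longlongrightarrow> z) at_top"
    then obtain e where e: "e > 0" and "\<not> eventually (\<lambda>t. dist (f t) z < e) at_top"
      unfolding tendsto_iff by blast
    then have "\<forall>N. \<exists>t\<ge>N. dist (f t) z \<ge> e"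
      unfolding eventually_at_top_linorder by (meson not_le)
    then obtain T where T: "\<And>N. T N \<ge> N" "\<And>N. dist (f (T N)) z \<ge> e" by metis
    have T_at_top: "filterlim (\<lambda>k. T (real k)) at_top sequentially"
      by (rule filterlim_at_top_mono[OF filterlim_real_sequentially]) (use T(1) in auto)
    obtain y \<rho>' where \<rho>': "strict_mono \<rho>'" and y: "((\<lambda>k. f (T (real k))) \<circ> \<rho>') \<longlonglongrightarrow> y"
      using bounded_imp_convergent_subsequence[OF bnd_seq[of "\<lambda>k. T (real k)"]] by blast
    have "Q y"
      using cluster[OF subseq_at_top[OF T_at_top \<rho>']] y by (simp add: o_def)
    then have "y = z" using unique Qz by blast
    have "(\<lambda>k. dist (f (T (real (\<rho>' k)))) z) \<longlonglongrightarrow> dist y z"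
      using y by (intro tendsto_intros) (simp add: o_def)
    then have "e \<le> dist y z"
      by (rule tendsto_lowerbound) (use T(2) in auto)
    then show False using \<open>y = z\<close> e by simp
  qed
  then show ?thesis using Qz by blast
qed

subsection \<open>The limit of \<open>(S + t P)\<^sup>-\<^sup>1\<close>\<close>

text \<open>The equations characterising the \<open>j\<close>-th column of the limit: it is a null vector of \<open>P\<close>
  satisfying the \<open>t\<close>-independent equations found for the columns of \<open>(S + t P)\<^sup>-\<^sup>1\<close>.\<close>
definition reduced_solution :: "real^'n^'n \<Rightarrow> real \<Rightarrow> real \<Rightarrow> 'n \<Rightarrow> real^'n \<Rightarrow> bool" where
  "reduced_solution P \<alpha> l j z \<longleftrightarrow> z \<in> sl_kernel P \<and>
     (\<forall>w\<in>sl_kernel P. \<alpha> * (\<Sum>i\<in>UNIV. w $ i * z $ i) + l * (\<Sum>i\<in>UNIV. z $ i) * (\<Sum>i\<in>UNIV. w $ i) = w $ j)"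

text \<open>The reduced equations are the normal equations of a positive definite form on the
  null space, hence have at most one solution.\<close>
lemma reduced_solution_unique:
  assumes a: "\<alpha> > 0" and l: "l \<ge> 0"
    and y: "reduced_solution P \<alpha> l j y" and y': "reduced_solution P \<alpha> l j y'"
  shows "y = y'"
proof -
  define d where "d = y - y'"
  have "d \<in> sl_kernel P"
    using y y' sl_kernel_diff unfolding reduced_solution_def d_def by blast
  then have "\<alpha> * (\<Sum>i\<in>UNIV. d $ i * y $ i) + l * (\<Sum>i\<in>UNIV. y $ i) * (\<Sum>i\<in>UNIV. d $ i)
      = \<alpha> * (\<Sum>i\<in>UNIV. d $ i * y' $ i) + l * (\<Sum>i\<in>UNIV. y' $ i) * (\<Sum>i\<in>UNIV. d $ i)"
    using y y' unfolding reduced_solution_def by auto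
  moreover have "(\<Sum>i\<in>UNIV. d $ i * y $ i) - (\<Sum>i\<in>UNIV. d $ i * y' $ i) = (\<Sum>i\<in>UNIV. d $ i * d $ i)"
    by (simp add: sum_subtractf[symmetric] d_def right_diff_distrib)
  moreover have "(\<Sum>i\<in>UNIV. y $ i) - (\<Sum>i\<in>UNIV. y' $ i) = (\<Sum>i\<in>UNIV. d $ i)"
    by (simp add: sum_subtractf[symmetric] d_def)
  ultimately have "\<alpha> * (\<Sum>i\<in>UNIV. d $ i * d $ i) + l * (\<Sum>i\<in>UNIV. d $ i)\<^sup>2 = 0"
    by (simp add: algebra_simps power2_eq_square)
  moreover have "\<alpha> * (\<Sum>i\<in>UNIV. d $ i * d $ i) \<ge> 0" "l * (\<Sum>i\<in>UNIV. d $ i)\<^sup>2 \<ge> 0"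
    using a l by (simp_all add: sum_nonneg)
  ultimately have "\<alpha> * (\<Sum>i\<in>UNIV. d $ i * d $ i) = 0" by linarith
  then have "(\<Sum>i\<in>UNIV. d $ i * d $ i) = 0" using a by simp
  then have "d $ i = 0" for i
    by (simp add: sum_nonneg_eq_0_iff)
  then show ?thesis unfolding d_def by (simp add: vec_eq_iff)
qed

text \<open>Limits of columns of \<open>(S + t\<^sub>k P)\<^sup>-\<^sup>1\<close> with \<open>t\<^sub>k \<rightarrow> \<infinity>\<close> are reduced solutions:
  the \<open>t\<close>-independent equations pass to the limit, and \<open>x\<^sup>T P x \<le> 1/(\<alpha> t\<^sub>k) \<rightarrow> 0\<close>
  puts the limit into the null space.\<close>
lemma reduced_solution_of_limit:
  assumes sl: "signless_laplacian P" and a: "\<alpha> > 0" and l: "l \<ge> 0"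
    and t: "filterlim t at_top sequentially" and t0: "\<And>k. t k \<ge> 0"
    and x: "\<And>k. pencil \<alpha> l (t k) P *v x k = axis j 1"
    and lim: "x \<longlonglongrightarrow> y"
  shows "reduced_solution P \<alpha> l j y"
proof -
  have eq: "\<alpha> * (\<Sum>i\<in>UNIV. w $ i * y $ i) + l * (\<Sum>i\<in>UNIV. y $ i) * (\<Sum>i\<in>UNIV. w $ i) = w $ j"
    if w: "w \<in> sl_kernel P" for w
  proof -
    have "(\<lambda>k. \<alpha> * (\<Sum>i\<in>UNIV. w $ i * x k $ i) + l * (\<Sum>i\<in>UNIV. x k $ i) * (\<Sum>i\<in>UNIV. w $ i))
        \<longlonglongrightarrow> \<alpha> * (\<Sum>i\<in>UNIV. w $ i * y $ i) + l * (\<Sum>i\<in>UNIV. y $ i) * (\<Sum>i\<in>UNIV. w $ i)"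
      by (intro tendsto_intros lim)
    then have "(\<lambda>k. w $ j) \<longlonglongrightarrow> \<alpha> * (\<Sum>i\<in>UNIV. w $ i * y $ i) + l * (\<Sum>i\<in>UNIV. y $ i) * (\<Sum>i\<in>UNIV. w $ i)"
      using pencil_column_kernel_eq[OF sl x w] by simp
    then show ?thesis using LIMSEQ_const_iff by metis
  qed
  have Q_lim: "(\<lambda>k. quad_form P (x k)) \<longlonglongrightarrow> quad_form P y"
    unfolding quad_form_def by (intro tendsto_intros lim)
  have bound_lim: "(\<lambda>k. (1 / \<alpha>) * inverse (t k)) \<longlonglongrightarrow> (1 / \<alpha>) * 0"
    by (intro tendsto_intros tendsto_inverse_0_at_top t)
  have "eventually (\<lambda>k. quad_form P (x k) \<le> (1 / \<alpha>) * inverse (t k)) sequentially"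
    using filterlim_at_top_dense[THEN iffD1, OF t, rule_format, of 0]
  proof eventually_elim
    case (elim k)
    then show ?case
      using pencil_column_bounds(2)[OF sl a l t0 x, of k] a by (simp add: field_simps)
  qed
  then have "quad_form P y \<le> 0"
    using tendsto_le[OF sequentially_bot bound_lim Q_lim] by simp
  then have "quad_form P y = 0"
    using quad_form_nonneg[OF sl, of y] by simp
  then show ?thesis
    unfolding reduced_solution_def using quad_form_zero_imp_kernel[OF sl] eq by blast
qed

lemma pencil_column_limit:
  assumes sl: "signless_laplacian P" and a: "\<alpha> > 0" and l: "l \<ge> 0"
  shows "\<exists>z. reduced_solution P \<alpha> l j z \<and>
    ((\<lambda>t. matrix_inv (pencil \<alpha> l (max t 0) P) *v axis j 1) \<longlongrightarrow> z) at_top"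
proof (rule tendsto_at_top_unique_cluster)
  let ?x = "\<lambda>t. matrix_inv (pencil \<alpha> l (max t 0) P) *v axis j 1"
  have solves: "pencil \<alpha> l (max t 0) P *v ?x t = axis j 1" for t
    using pencil_inverse[OF sl a l, of "max t 0"] by (simp add: matrix_vector_mul_assoc)
  show "bounded (range ?x)"
    unfolding bounded_iff using pencil_column_bounds(1)[OF sl a l _ solves] by auto
  fix r y assume r: "filterlim r at_top sequentially" and y: "(\<lambda>k. ?x (r k)) \<longlonglongrightarrow> y"
  have "filterlim (\<lambda>k. max (r k) 0) at_top sequentially"
    by (rule filterlim_at_top_mono[OF r]) auto
  then show "reduced_solution P \<alpha> l j y"
    by (rule reduced_solution_of_limit[OF sl a l _ _ solves y]) simp
qed (use reduced_solution_unique[OF a l] in blast)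

lemma pencil_inverse_limit:
  fixes P :: "real^'n^'n"
  assumes sl: "signless_laplacian P" and a: "\<alpha> > 0" and l: "l \<ge> 0"
  shows "\<exists>L. ((\<lambda>t. matrix_inv (pencil \<alpha> l t P)) \<longlongrightarrow> L) at_top \<and>
             (\<forall>j. reduced_solution P \<alpha> l j (column j L))"
proof -
  obtain z where z: "\<And>j. reduced_solution P \<alpha> l j (z j) \<and>
      ((\<lambda>t. matrix_inv (pencil \<alpha> l (max t 0) P) *v axis j 1) \<longlongrightarrow> z j) at_top"
    using pencil_column_limit[OF sl a l] by metis
  define L :: "real^'n^'n" where "L = (\<chi> i j. z j $ i)"
  have "((\<lambda>t. matrix_inv (pencil \<alpha> l (max t 0) P)) \<longlongrightarrow> L) at_top"
    unfolding L_def
  proof (intro vec_tendstoI)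
    fix i j
    show "((\<lambda>t. matrix_inv (pencil \<alpha> l (max t 0) P) $ i $ j) \<longlongrightarrow> (\<chi> i j. z j $ i) $ i $ j) at_top"
      using tendsto_vec_nth[OF z[THEN conjunct2], of j i]
      by (simp add: matrix_vector_mult_basis column_def)
  qed
  moreover have "eventually (\<lambda>t. matrix_inv (pencil \<alpha> l (max t 0) P) = matrix_inv (pencil \<alpha> l t P)) at_top"
    by (rule eventually_at_top_linorderI[of 0]) simp
  ultimately have "((\<lambda>t. matrix_inv (pencil \<alpha> l t P)) \<longlongrightarrow> L) at_top"
    by (rule Lim_transform_eventually)
  moreover have "column j L = z j" for j
    by (simp add: L_def column_def vec_eq_iff)
  ultimately show ?thesis using z by metis
qed

lemma reduced_solution_symmetric:
  assumes x: "reduced_solution P \<alpha> l i x" and y: "reduced_solution P \<alpha> l j y"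
  shows "y $ i = x $ j"
proof -
  have "\<alpha> * (\<Sum>k\<in>UNIV. x $ k * y $ k) + l * (\<Sum>k\<in>UNIV. y $ k) * (\<Sum>k\<in>UNIV. x $ k) = x $ j"
    and "\<alpha> * (\<Sum>k\<in>UNIV. y $ k * x $ k) + l * (\<Sum>k\<in>UNIV. x $ k) * (\<Sum>k\<in>UNIV. y $ k) = y $ i"
    using x y unfolding reduced_solution_def by blast+
  then show ?thesis by (simp add: mult.commute mult.left_commute)
qed

subsection \<open>Two polynomial inequalities\<close>

text \<open>The estimate \<open>(\<alpha> + l n)(Y - X) < n - 2\<close> when the largest coordinate level of the
  reduced solution is attained only once (\<open>c = 1\<close> below).\<close>
lemma key_ineq_single:
  fixes n \<alpha> l X Y :: real
  assumes n3: "n \<ge> 3" and l: "l > 0" and al: "\<alpha> \<ge> (n - 2) * l" and X: "X > 0"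
    and Y: "Y \<le> (n - 2) * X"
    and W: "l * Y\<^sup>2 + (n - 1) * \<alpha> * X\<^sup>2 + (n - 1) * l * X\<^sup>2 \<le> (n - 1) * X"
  shows "(\<alpha> + l * n) * (Y - X) < n - 2"
proof (cases "Y \<le> X")
  case True
  have "(n - 2) * l > 0" "l * n > 0" using n3 l by simp_all
  then have "\<alpha> + l * n > 0" using al by linarith
  then have "(\<alpha> + l * n) * (Y - X) \<le> 0" using True by (simp add: mult_nonneg_nonpos)
  then show ?thesis using n3 by linarith
next
  case False
  define u where "u = Y - (n - 1) * X"
  have u: "u < 0" using Y X unfolding u_def by (simp add: algebra_simps)
  have c: "l * (n - 4) - \<alpha> < 0" using al l by (simp add: algebra_simps)
  have id: "(n - 2) * (l * Y\<^sup>2 + (n - 1) * (\<alpha> + l) * X\<^sup>2) - (n - 1) * (\<alpha> + l * n) * (Y - X) * X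
      = (n - 2) * l * u\<^sup>2 + (n - 1) * ((l * (n - 4) - \<alpha>) * u) * X"
    unfolding u_def by (simp add: algebra_simps power2_eq_square)
  have "(n - 2) * l * u\<^sup>2 \<ge> 0" using n3 l by simp
  moreover have "(n - 1) * ((l * (n - 4) - \<alpha>) * u) * X > 0"
    using n3 X c u by (simp add: mult_neg_neg)
  ultimately have "(n - 1) * (\<alpha> + l * n) * (Y - X) * X < (n - 2) * (l * Y\<^sup>2 + (n - 1) * (\<alpha> + l) * X\<^sup>2)"
    using id by linarith
  also have "\<dots> \<le> (n - 2) * ((n - 1) * X)"
    using W n3 by (intro mult_left_mono) (auto simp: algebra_simps)
  finally have "((\<alpha> + l * n) * (Y - X)) * ((n - 1) * X) < (n - 2) * ((n - 1) * X)"
    by (simp add: algebra_simps)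
  moreover have "(n - 1) * X > 0" using n3 X by simp
  ultimately show ?thesis using mult_less_cancel_right_pos by blast
qed

lemma level_coefficient_bound:
  fixes n c D :: real
  assumes nd: "n = c + D" and c2: "c \<ge> 2" and D1: "D \<ge> 1"
  shows "(n - 2) * c * (3 * n - 4) + (n - 2) ^ 3 - (n - 1)\<^sup>2 * D \<ge> (n - 2) * (4 * n - 5)"
proof -
  have n3: "n \<ge> 3" using nd c2 D1 by simp
  have "(n - 2) * c * (3 * n - 4) + (n - 2) ^ 3 - (n - 1)\<^sup>2 * D
      = c * ((n - 2) * (3 * n - 4) + (n - 1)\<^sup>2) + (n - 2) ^ 3 - n * (n - 1)\<^sup>2"
    using nd by (simp add: algebra_simps power2_eq_square)
  also have "\<dots> \<ge> 2 * ((n - 2) * (3 * n - 4) + (n - 1)\<^sup>2) + (n - 2) ^ 3 - n * (n - 1)\<^sup>2"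
  proof -
    have "(n - 2) * (3 * n - 4) + (n - 1)\<^sup>2 \<ge> 0" using n3 by simp
    then have "2 * ((n - 2) * (3 * n - 4) + (n - 1)\<^sup>2) \<le> c * ((n - 2) * (3 * n - 4) + (n - 1)\<^sup>2)"
      using c2 by (intro mult_right_mono) auto
    then show ?thesis by linarith
  qed
  also have "2 * ((n - 2) * (3 * n - 4) + (n - 1)\<^sup>2) + (n - 2) ^ 3 - n * (n - 1)\<^sup>2 = (n - 2) * (4 * n - 5)"
    by (simp add: algebra_simps power2_eq_square power3_eq_cube)
  finally show ?thesis by simp
qed

text \<open>A positive definite quadratic form in \<open>Y\<close> needed when the top level has \<open>c \<ge> 2\<close> elements;
  it is the case \<open>\<alpha> = (n - 2) l\<close> of the next inequality.\<close>
lemma level_quadratic_pos: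
  fixes n c D q X Y :: real
  assumes nd: "n = c + D" and c2: "c \<ge> 2" and D1: "D \<ge> 1" and q: "q > 0"
    and Xq: "X\<^sup>2 \<le> c\<^sup>2 * q"
  shows "(n - 2) * c * Y\<^sup>2 - 2 * (n - 1) * D * X * Y + (3 * n - 4) * D * X\<^sup>2 + (n - 2)\<^sup>2 * c * D * q > 0"
    (is "?T > 0")
proof -
  have n3: "n \<ge> 3" using nd c2 D1 by simp
  define A where "A = (n - 2) * c"
  define V where "V = (n - 2) * c * (3 * n - 4) * X\<^sup>2 + (n - 2) ^ 3 * c\<^sup>2 * q - (n - 1)\<^sup>2 * D * X\<^sup>2"
  have A: "A > 0" unfolding A_def using n3 c2 by simp
  have AT: "A * ?T = (A * Y - (n - 1) * D * X)\<^sup>2 + D * V"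
    unfolding A_def V_def by (simp add: algebra_simps power2_eq_square power3_eq_cube)
  have coef: "(n - 2) * c * (3 * n - 4) + (n - 2) ^ 3 - (n - 1)\<^sup>2 * D \<ge> (n - 2) * (4 * n - 5)"
    by (rule level_coefficient_bound[OF nd c2 D1])
  have V: "V > 0"
  proof -
    have "V = ((n - 2) * c * (3 * n - 4) + (n - 2) ^ 3 - (n - 1)\<^sup>2 * D) * X\<^sup>2 + (n - 2) ^ 3 * (c\<^sup>2 * q - X\<^sup>2)"
      unfolding V_def by (simp add: algebra_simps)
    moreover have "((n - 2) * c * (3 * n - 4) + (n - 2) ^ 3 - (n - 1)\<^sup>2 * D) * X\<^sup>2 \<ge> (n - 2) * (4 * n - 5) * X\<^sup>2"
      using coef by (intro mult_right_mono) auto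
    moreover have "(n - 2) * (4 * n - 5) * X\<^sup>2 + (n - 2) ^ 3 * (c\<^sup>2 * q - X\<^sup>2) > 0"
    proof (cases "X = 0")
      case True
      then show ?thesis using n3 c2 q by simp
    next
      case False
      then have "(n - 2) * (4 * n - 5) * X\<^sup>2 > 0" using n3 by simp
      moreover have "(n - 2) ^ 3 * (c\<^sup>2 * q - X\<^sup>2) \<ge> 0" using n3 Xq by simp
      ultimately show ?thesis by linarith
    qed
    ultimately show ?thesis by linarith
  qed
  have "D * V > 0" using V D1 by simp
  then have "A * ?T > 0"
    using AT zero_le_power2[of "A * Y - (n - 1) * D * X"] by linarith
  then show ?thesis using A by (simp add: zero_less_mult_iff)
qed

lemma product_le_of_squares:
  fixes X Y a b q :: real
  assumes X: "X\<^sup>2 \<le> a\<^sup>2 * q" and Y: "Y\<^sup>2 \<le> b\<^sup>2 * q"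
    and a: "a \<ge> 0" and b: "b \<ge> 0" and q: "q \<ge> 0"
  shows "X * Y \<le> a * b * q"
proof (rule power2_le_imp_le)
  have "(X * Y)\<^sup>2 = X\<^sup>2 * Y\<^sup>2" by (simp add: power_mult_distrib)
  also have "\<dots> \<le> (a\<^sup>2 * q) * (b\<^sup>2 * q)" using X Y q by (intro mult_mono) auto
  also have "\<dots> = (a * b * q)\<^sup>2" by (simp add: power_mult_distrib power2_eq_square)
  finally show "(X * Y)\<^sup>2 \<le> (a * b * q)\<^sup>2" .
  show "0 \<le> a * b * q" using a b q by simp
qed

text \<open>The estimate \<open>(\<alpha> + l n)(Y - X) < n - 2\<close> when the top level has \<open>c \<ge> 2\<close> elements.
  The left-hand side minus the right-hand side, suitably scaled, is affine in \<open>\<alpha>\<close>, so it suffices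
  to check \<open>\<alpha> = (n - 2) l\<close>, which is the preceding lemma, and the sign of the slope.\<close>
lemma key_ineq_multiple:
  fixes n c D \<alpha> l q X Y :: real
  assumes nd: "n = c + D" and c2: "c \<ge> 2" and D1: "D \<ge> 1" and l: "l > 0"
    and al: "\<alpha> \<ge> (n - 2) * l" and q: "q > 0" and X0: "X > 0"
    and Xq: "X\<^sup>2 \<le> c\<^sup>2 * q" and Yq: "Y\<^sup>2 \<le> D\<^sup>2 * q"
    and W: "c * l * Y\<^sup>2 + c * D * \<alpha> * q + D * l * X\<^sup>2 \<le> D * X"
  shows "(\<alpha> + l * n) * (Y - X) < n - 2"
proof -
  have XY: "X * Y \<le> c * D * q"
    using product_le_of_squares[OF Xq Yq] c2 D1 q by simp
  define R where "R a = (n - 2) * (c * l * Y\<^sup>2 + c * D * a * q + D * l * X\<^sup>2) - (a + l * n) * D * X * (Y - X)" for a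
  have slope: "(n - 2) * c * D * q - D * X * (Y - X) \<ge> 0"
  proof -
    have "(n - 2) * c * q - c * D * q = c * (c - 2) * q" using nd by (simp add: algebra_simps)
    moreover have "c * (c - 2) * q \<ge> 0" using c2 q by simp
    ultimately have "(n - 2) * c * q - X * Y + X\<^sup>2 \<ge> 0"
      using XY zero_le_power2[of X] by linarith
    moreover have "(n - 2) * c * D * q - D * X * (Y - X) = D * ((n - 2) * c * q - X * Y + X\<^sup>2)"
      by (simp add: algebra_simps power2_eq_square)
    ultimately show ?thesis using D1 by simp
  qed
  have "R \<alpha> = R ((n - 2) * l) + (\<alpha> - (n - 2) * l) * ((n - 2) * c * D * q - D * X * (Y - X))"
    unfolding R_def by (simp add: algebra_simps)
  moreover have "R ((n - 2) * l) = l * ((n - 2) * c * Y\<^sup>2 - 2 * (n - 1) * D * X * Y + (3 * n - 4) * D * X\<^sup>2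
      + (n - 2)\<^sup>2 * c * D * q)"
    unfolding R_def by (simp add: algebra_simps power2_eq_square)
  moreover have "l * ((n - 2) * c * Y\<^sup>2 - 2 * (n - 1) * D * X * Y + (3 * n - 4) * D * X\<^sup>2
      + (n - 2)\<^sup>2 * c * D * q) > 0"
    using l level_quadratic_pos[OF nd c2 D1 q Xq] by simp
  moreover have "(\<alpha> - (n - 2) * l) * ((n - 2) * c * D * q - D * X * (Y - X)) \<ge> 0"
    using al slope by simp
  ultimately have "(\<alpha> + l * n) * D * X * (Y - X) < (n - 2) * (c * l * Y\<^sup>2 + c * D * \<alpha> * q + D * l * X\<^sup>2)"
    unfolding R_def by linarith
  also have "\<dots> \<le> (n - 2) * (D * X)"
    using W nd c2 D1 by (intro mult_left_mono) auto
  finally have "((\<alpha> + l * n) * (Y - X)) * (D * X) < (n - 2) * (D * X)"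
    by (simp add: algebra_simps)
  moreover have "D * X > 0" using D1 X0 by simp
  ultimately show ?thesis using mult_less_cancel_right_pos by blast
qed

subsection \<open>The scalar core of the norm estimate\<close>

text \<open>Here \<open>a\<close> is the diagonal entry of a reduced
  solution, \<open>c\<close> and \<open>D\<close> count the coordinates with \<open>|z\<^sub>i| = a\<close> resp.\ \<open>|z\<^sub>i| \<noteq> a\<close>, \<open>g\<close> and \<open>m\<close>
  are the corresponding sums of signs, \<open>N\<close>, \<open>E\<close>, \<open>s\<close> the sums of \<open>|z\<^sub>i|\<close>, \<open>z\<^sub>i\<^sup>2\<close>, \<open>z\<^sub>i\<close> over the
  second group, and \<open>\<sigma> = \<Sum> z\<^sub>i\<close>.  With \<open>X = \<sigma> g\<close>, \<open>Y = -\<sigma> m\<close>, \<open>q = \<sigma>\<^sup>2\<close> the three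
  reduced equations and Cauchy--Schwarz yield the premises of the polynomial inequalities.\<close>
lemma level_parameters:
  fixes c D \<alpha> l a \<sigma> g m N E s :: real
  assumes c1: "c \<ge> 1" and D1: "D \<ge> 1" and l: "l > 0" and \<alpha>: "\<alpha> > 0" and a: "a > 0"
    and \<sigma>0: "\<sigma> \<noteq> 0" and g: "\<bar>g\<bar> \<le> c" and m: "\<bar>m\<bar> \<le> D" and NE: "N\<^sup>2 \<le> D * E"
    and \<sigma>: "\<sigma> = a * g + s"
    and eq1: "\<alpha> * (c * a) + l * \<sigma> * g = 1" and eq2: "\<alpha> * N + l * \<sigma> * m = 0"
    and eq3: "\<alpha> * E + l * \<sigma> * s = 0"
  defines "X \<equiv> \<sigma> * g" and "Y \<equiv> - \<sigma> * m" and "q \<equiv> \<sigma>\<^sup>2"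
  shows "q > 0" and "X > 0" and "X\<^sup>2 \<le> c\<^sup>2 * q" and "Y\<^sup>2 \<le> D\<^sup>2 * q"
    and "c * l * Y\<^sup>2 + c * D * \<alpha> * q + D * l * X\<^sup>2 \<le> D * X"
proof -
  show q: "q > 0" unfolding q_def using \<sigma>0 by simp
  have Y_bound: "l * Y\<^sup>2 \<le> \<alpha> * D * (a * X - q)"
  proof -
    have "l * Y = \<alpha> * N" unfolding Y_def using eq2 by (simp add: algebra_simps)
    then have "l\<^sup>2 * Y\<^sup>2 = \<alpha>\<^sup>2 * N\<^sup>2" by (metis power_mult_distrib)
    also have "\<dots> \<le> \<alpha>\<^sup>2 * (D * E)" using NE by (simp add: mult_left_mono)
    also have "\<alpha>\<^sup>2 * (D * E) = \<alpha> * D * (\<alpha> * E)" by (simp add: power2_eq_square)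
    also have "\<alpha> * E = l * (a * X - q)" using eq3 \<sigma> unfolding X_def q_def
      by (simp add: algebra_simps power2_eq_square)
    finally have "l * (l * Y\<^sup>2) \<le> l * (\<alpha> * D * (a * X - q))"
      by (simp add: algebra_simps power2_eq_square)
    then show ?thesis using l by simp
  qed
  show X_pos: "X > 0"
  proof -
    have "l * Y\<^sup>2 \<ge> 0" using l by simp
    then have "\<alpha> * D * (a * X - q) \<ge> 0" using Y_bound by linarith
    moreover have "\<alpha> * D > 0" using \<alpha> D1 by simp
    ultimately have "a * X - q \<ge> 0" by (simp add: zero_le_mult_iff)
    then have "a * X > 0" using q by linarith
    then show ?thesis using a by (simp add: zero_less_mult_iff)
  qed
  have "g\<^sup>2 \<le> c\<^sup>2" using g c1 abs_le_square_iff[of g c] by simp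
  then show X_sq: "X\<^sup>2 \<le> c\<^sup>2 * q"
    unfolding X_def q_def by (simp add: power_mult_distrib mult.commute mult_left_mono)
  have "m\<^sup>2 \<le> D\<^sup>2" using m D1 abs_le_square_iff[of m D] by simp
  then show Y_sq: "Y\<^sup>2 \<le> D\<^sup>2 * q"
    unfolding Y_def q_def
    by (simp add: power_mult_distrib) (metis mult.commute mult_left_mono zero_le_power2)
  show W: "c * l * Y\<^sup>2 + c * D * \<alpha> * q + D * l * X\<^sup>2 \<le> D * X"
  proof -
    have "c * (l * Y\<^sup>2) \<le> c * (\<alpha> * D * (a * X - q))"
      using Y_bound c1 by (intro mult_left_mono) auto
    moreover have "\<alpha> * (c * a) = 1 - l * X" using eq1 unfolding X_def by simp
    moreover have "c * (\<alpha> * D * (a * X - q)) = D * X * (\<alpha> * (c * a)) - c * D * \<alpha> * q"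
      by (simp add: algebra_simps)
    ultimately have "c * (l * Y\<^sup>2) \<le> D * X * (1 - l * X) - c * D * \<alpha> * q" by simp
    then show ?thesis by (simp add: algebra_simps power2_eq_square)
  qed
qed

lemma level_estimate_nondegenerate:
  fixes n c D \<alpha> l a \<sigma> g m N E s :: real
  assumes nd: "n = c + D" and n3: "n \<ge> 3" and c1: "c \<ge> 1" and D1: "D \<ge> 1"
    and l: "l > 0" and al: "\<alpha> \<ge> (n - 2) * l" and a: "a > 0" and \<sigma>0: "\<sigma> \<noteq> 0"
    and g: "\<bar>g\<bar> \<le> c" and m: "\<bar>m\<bar> \<le> D" and NE: "N\<^sup>2 \<le> D * E"
    and \<sigma>: "\<sigma> = a * g + s"
    and eq1: "\<alpha> * (c * a) + l * \<sigma> * g = 1" and eq2: "\<alpha> * N + l * \<sigma> * m = 0"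
    and eq3: "\<alpha> * E + l * \<sigma> * s = 0"
    and single: "c < 2 \<Longrightarrow> c = 1 \<and> g = 1 \<and> \<bar>m\<bar> \<le> D - 1"
  shows "(\<alpha> + l * n) * (- \<sigma> * m - \<sigma> * g) < n - 2"
proof -
  define X where "X = \<sigma> * g"
  define Y where "Y = - \<sigma> * m"
  define q where "q = \<sigma>\<^sup>2"
  have "(n - 2) * l > 0" using n3 l by simp
  then have \<alpha>: "\<alpha> > 0" using al by linarith
  note params = level_parameters[OF c1 D1 l \<alpha> a \<sigma>0 g m NE \<sigma> eq1 eq2 eq3, folded X_def Y_def q_def]
  note q = params(1) and X_pos = params(2) and X_sq = params(3) and Y_sq = params(4) and W = params(5)
  have "(\<alpha> + l * n) * (Y - X) < n - 2"
  proof (cases "c \<ge> 2")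
    case True
    show ?thesis by (rule key_ineq_multiple[OF nd True D1 l al q X_pos X_sq Y_sq W])
  next
    case False
    then have c: "c = 1" and g1: "g = 1" and m1: "\<bar>m\<bar> \<le> D - 1" using single by auto
    have Y_le: "Y \<le> (n - 2) * X"
    proof -
      have "Y \<le> \<bar>\<sigma>\<bar> * \<bar>m\<bar>" unfolding Y_def by (simp add: abs_mult[symmetric])
      also have "\<dots> \<le> X * (D - 1)" using m1 X_pos g1 unfolding X_def by (simp add: mult_left_mono)
      finally show ?thesis using nd c by (simp add: algebra_simps)
    qed
    have "l * Y\<^sup>2 + (n - 1) * \<alpha> * X\<^sup>2 + (n - 1) * l * X\<^sup>2 \<le> (n - 1) * X"
      using W nd c g1 unfolding q_def X_def by (simp add: algebra_simps)
    then show ?thesis by (rule key_ineq_single[OF n3 l al X_pos Y_le])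
  qed
  then show ?thesis unfolding X_def Y_def by (simp add: algebra_simps)
qed

lemma level_estimate:
  fixes n c D \<alpha> l a \<sigma> g m N E s :: real
  assumes nd: "n = c + D" and n3: "n \<ge> 3" and c1: "c \<ge> 1" and D: "D = 0 \<or> D \<ge> 1"
    and l: "l > 0" and al: "\<alpha> \<ge> (n - 2) * l" and a: "a > 0"
    and g: "\<bar>g\<bar> \<le> c" and m: "\<bar>m\<bar> \<le> D" and NE: "N\<^sup>2 \<le> D * E" and sN: "\<bar>s\<bar> \<le> N"
    and \<sigma>: "\<sigma> = a * g + s"
    and eq1: "\<alpha> * (c * a) + l * \<sigma> * g = 1" and eq2: "\<alpha> * N + l * \<sigma> * m = 0"
    and eq3: "\<alpha> * E + l * \<sigma> * s = 0"
    and single: "c < 2 \<Longrightarrow> c = 1 \<and> g = 1 \<and> \<bar>m\<bar> \<le> D - 1"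
  shows "(\<alpha> + l * n) * (- \<sigma> * m - \<sigma> * g) < n - 2"
proof -
  have "(n - 2) * l > 0" "l * n > 0" using n3 l by simp_all
  then have pos: "\<alpha> + l * n > 0" using al by linarith
  consider "\<sigma> = 0" | "D = 0" | "\<sigma> \<noteq> 0" "D \<ge> 1" using D by blast
  then show ?thesis
  proof cases
    case 1
    then show ?thesis using n3 by simp
  next
    case 2
    then have "m = 0" "N = 0" using m NE by auto
    then have "- \<sigma> * m - \<sigma> * g = - (a * g\<^sup>2)"
      using \<sigma> sN by (simp add: power2_eq_square)
    moreover have "a * g\<^sup>2 \<ge> 0" using a by simp
    ultimately have "(\<alpha> + l * n) * (- \<sigma> * m - \<sigma> * g) \<le> 0"
      using pos by (simp add: mult_nonneg_nonpos)
    then show ?thesis using n3 by linarith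
  next
    case 3
    then show ?thesis
      using level_estimate_nondegenerate[OF nd n3 c1 _ l al a _ g m NE \<sigma> eq1 eq2 eq3 single] by blast
  qed
qed

lemma l1_bound_from_estimate:
  fixes n \<alpha> l T Z :: real
  assumes \<alpha>: "\<alpha> > 0" and l: "l > 0" and pos: "\<alpha> + l * n > 0"
    and T: "\<alpha> * T = 1 + l * Z" and Z: "(\<alpha> + l * n) * Z < n - 2"
  shows "T < 1 / \<alpha> + l * (n - 2) / (\<alpha> * (\<alpha> + l * n))"
proof -
  have "Z < (n - 2) / (\<alpha> + l * n)" using Z pos by (simp add: field_simps)
  then have Z': "l * Z < l * ((n - 2) / (\<alpha> + l * n))" by (rule mult_strict_left_mono[OF _ l])
  have "\<alpha> * (l * (n - 2) / (\<alpha> * (\<alpha> + l * n))) = (\<alpha> * (l * (n - 2))) / (\<alpha> * (\<alpha> + l * n))"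
    by simp
  also have "\<dots> = l * (n - 2) / (\<alpha> + l * n)"
    using \<alpha> by (intro nonzero_mult_divide_mult_cancel_left) simp
  finally have "\<alpha> * (1 / \<alpha> + l * (n - 2) / (\<alpha> * (\<alpha> + l * n))) = 1 + l * ((n - 2) / (\<alpha> + l * n))"
    using \<alpha> by (simp add: distrib_left)
  then have "\<alpha> * T < \<alpha> * (1 / \<alpha> + l * (n - 2) / (\<alpha> * (\<alpha> + l * n)))"
    using T Z' by simp
  then show ?thesis using \<alpha> by simp
qed

lemma sum_sgn_abs_le_card:
  fixes z :: "'a \<Rightarrow> real"
  shows "\<bar>\<Sum>i\<in>A. sgn (z i)\<bar> \<le> real (card A)"
proof -
  have "\<bar>\<Sum>i\<in>A. sgn (z i)\<bar> \<le> (\<Sum>i\<in>A. \<bar>sgn (z i)\<bar>)" by (rule sum_abs)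
  also have "\<dots> \<le> (\<Sum>i\<in>A. 1)" by (intro sum_mono) (simp add: abs_sgn_eq)
  finally show ?thesis by simp
qed

lemma sum_sgn_abs_defect:
  fixes z :: "'a \<Rightarrow> real"
  assumes A: "finite A"
    and witness: "(\<exists>i\<in>A. z i = 0) \<or> (\<exists>i\<in>A. \<exists>k\<in>A. i \<noteq> k \<and> z k = - z i)"
  shows "\<bar>\<Sum>i\<in>A. sgn (z i)\<bar> \<le> real (card A) - 1"
  using witness
proof
  assume "\<exists>i\<in>A. z i = 0"
  then obtain i where i: "i \<in> A" "z i = 0" by blast
  then have "(\<Sum>k\<in>A. sgn (z k)) = (\<Sum>k\<in>A - {i}. sgn (z k))"
    using A by (simp add: sum.remove)
  moreover have "card A \<ge> 1"
    using A i by (metis One_nat_def Suc_leI card_gt_0_iff empty_iff)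
  then have "real (card (A - {i})) = real (card A) - 1"
    using A i by (simp add: card_Diff_singleton of_nat_diff)
  ultimately show ?thesis
    using sum_sgn_abs_le_card[of z "A - {i}"] by simp
next
  assume "\<exists>i\<in>A. \<exists>k\<in>A. i \<noteq> k \<and> z k = - z i"
  then obtain i k where ik: "i \<in> A" "k \<in> A" "i \<noteq> k" "z k = - z i" by blast
  have "(\<Sum>j\<in>A. sgn (z j)) = sgn (z i) + sgn (z k) + (\<Sum>j\<in>A - {i} - {k}. sgn (z j))"
    using A ik by (simp add: sum.remove sum.remove[of "A - {i}" k])
  also have "sgn (z i) + sgn (z k) = 0" using ik by (simp add: sgn_minus)
  finally have "(\<Sum>j\<in>A. sgn (z j)) = (\<Sum>j\<in>A - {i} - {k}. sgn (z j))" by simp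
  moreover have "card A \<ge> 2"
    using card_mono[OF A, of "{i, k}"] ik by simp
  then have "real (card (A - {i} - {k})) = real (card A) - 2"
    using A ik by (simp add: card_Diff_singleton of_nat_diff)
  ultimately show ?thesis
    using sum_sgn_abs_le_card[of z "A - {i} - {k}"] by simp
qed

subsection \<open>Testing the reduced equations against odd functions of the solution\<close>

text \<open>Since odd functions preserve the null space, a reduced solution can be tested against
  \<open>\<phi>(z)\<close> for any odd \<open>\<phi>\<close>.\<close>
lemma reduced_solution_probe:
  assumes z: "reduced_solution P \<alpha> l j z" and odd: "\<And>y. \<phi> (- y) = - \<phi> y"
  shows "\<alpha> * (\<Sum>i\<in>UNIV. \<phi> (z $ i) * z $ i) + l * (\<Sum>i\<in>UNIV. z $ i) * (\<Sum>i\<in>UNIV. \<phi> (z $ i)) = \<phi> (z $ j)"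
proof -
  have "(\<chi> i. \<phi> (z $ i)) \<in> sl_kernel P"
    using sl_kernel_odd_map[of z P \<phi>] odd z unfolding reduced_solution_def by blast
  then show ?thesis using z unfolding reduced_solution_def by force
qed

lemma reduced_solution_level_probe:
  fixes z :: "real^'n"
  assumes z: "reduced_solution P \<alpha> l j z" and odd: "\<And>y. \<psi> (- y) = - \<psi> y"
  shows "\<alpha> * (\<Sum>i\<in>{i. R \<bar>z $ i\<bar>}. \<psi> (z $ i) * z $ i)
      + l * (\<Sum>i\<in>UNIV. z $ i) * (\<Sum>i\<in>{i. R \<bar>z $ i\<bar>}. \<psi> (z $ i))
      = (if R \<bar>z $ j\<bar> then \<psi> (z $ j) else 0)"
proof -
  have filter: "(\<Sum>i\<in>{i. R \<bar>z $ i\<bar>}. f i) = (\<Sum>i\<in>UNIV. if R \<bar>z $ i\<bar> then f i else 0)"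
    for f :: "'n \<Rightarrow> real"
    using sum.inter_filter[of UNIV f "\<lambda>i. R \<bar>z $ i\<bar>"] by simp
  have "(\<Sum>i\<in>UNIV. (if R \<bar>z $ i\<bar> then \<psi> (z $ i) else 0) * z $ i)
      = (\<Sum>i\<in>{i. R \<bar>z $ i\<bar>}. \<psi> (z $ i) * z $ i)"
    unfolding filter by (intro sum.cong) auto
  moreover have "(\<Sum>i\<in>UNIV. if R \<bar>z $ i\<bar> then \<psi> (z $ i) else 0) = (\<Sum>i\<in>{i. R \<bar>z $ i\<bar>}. \<psi> (z $ i))"
    unfolding filter ..
  moreover have "(if R \<bar>- y\<bar> then \<psi> (- y) else 0) = - (if R \<bar>y\<bar> then \<psi> y else 0)" for y
    using odd by simp
  ultimately show ?thesis
    using reduced_solution_probe[OF z, of "\<lambda>y. if R \<bar>y\<bar> then \<psi> y else 0"] by simp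
qed

text \<open>Testing against \<open>z\<close> itself: \<open>\<alpha> |z|\<^sup>2 + l (\<Sum> z)\<^sup>2 = z\<^sub>j\<close>.\<close>
lemma reduced_solution_diag:
  assumes z: "reduced_solution P \<alpha> l j z" and \<alpha>: "\<alpha> > 0" and l: "l \<ge> 0"
  shows "z $ j \<ge> 0" and "z $ j = 0 \<Longrightarrow> z = 0"
proof -
  have eq: "\<alpha> * (\<Sum>i\<in>UNIV. z $ i * z $ i) + l * ((\<Sum>i\<in>UNIV. z $ i) * (\<Sum>i\<in>UNIV. z $ i)) = z $ j"
    using reduced_solution_probe[OF z, of "\<lambda>y. y"] by (simp add: mult.assoc)
  have sq: "\<alpha> * (\<Sum>i\<in>UNIV. z $ i * z $ i) \<ge> 0" using \<alpha> by (simp add: sum_nonneg)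
  have sum_sq: "l * ((\<Sum>i\<in>UNIV. z $ i) * (\<Sum>i\<in>UNIV. z $ i)) \<ge> 0" using l by simp
  then show "z $ j \<ge> 0" using eq sq by linarith
  assume "z $ j = 0"
  then have "\<alpha> * (\<Sum>i\<in>UNIV. z $ i * z $ i) = 0" using eq sq sum_sq by linarith
  then have "(\<Sum>i\<in>UNIV. z $ i * z $ i) = 0" using \<alpha> by simp
  then show "z = 0" by (simp add: sum_nonneg_eq_0_iff vec_eq_iff)
qed

subsection \<open>The \<open>\<ell>\<^sub>1\<close>-norm of a reduced solution\<close>

text \<open>Splitting the coordinates of a reduced solution \<open>z\<close> into the top level \<open>G = {i. |z\<^sub>i| = z\<^sub>j}\<close>
  and the rest \<open>H\<close>, and testing against sign and identity functions on each part.\<close>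
lemma reduced_solution_levels:
  fixes z :: "real^'n"
  assumes z: "reduced_solution P \<alpha> l j z" and a: "z $ j > 0"
  defines "G \<equiv> {i. \<bar>z $ i\<bar> = z $ j}" and "H \<equiv> {i. \<bar>z $ i\<bar> \<noteq> z $ j}"
    and "\<sigma> \<equiv> \<Sum>i\<in>UNIV. z $ i"
  shows "\<alpha> * (real (card G) * z $ j) + l * \<sigma> * (\<Sum>i\<in>G. sgn (z $ i)) = 1"
    and "\<alpha> * (\<Sum>i\<in>H. \<bar>z $ i\<bar>) + l * \<sigma> * (\<Sum>i\<in>H. sgn (z $ i)) = 0"
    and "\<alpha> * (\<Sum>i\<in>H. (z $ i)\<^sup>2) + l * \<sigma> * (\<Sum>i\<in>H. z $ i) = 0"
    and "\<sigma> = z $ j * (\<Sum>i\<in>G. sgn (z $ i)) + (\<Sum>i\<in>H. z $ i)"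
    and "(\<Sum>i\<in>UNIV. \<bar>z $ i\<bar>) = real (card G) * z $ j + (\<Sum>i\<in>H. \<bar>z $ i\<bar>)"
proof -
  have sgn_times: "sgn y * y = \<bar>y\<bar>" for y :: real
    by (simp add: abs_sgn mult.commute)
  have "\<alpha> * (\<Sum>i\<in>G. \<bar>z $ i\<bar>) + l * \<sigma> * (\<Sum>i\<in>G. sgn (z $ i)) = 1"
    using reduced_solution_level_probe[OF z, of sgn "\<lambda>v. v = z $ j"] a
    unfolding G_def \<sigma>_def by (simp add: sgn_minus sgn_times)
  moreover have "(\<Sum>i\<in>G. \<bar>z $ i\<bar>) = real (card G) * z $ j"
    unfolding G_def by simp
  ultimately show "\<alpha> * (real (card G) * z $ j) + l * \<sigma> * (\<Sum>i\<in>G. sgn (z $ i)) = 1" by simp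
  show "\<alpha> * (\<Sum>i\<in>H. \<bar>z $ i\<bar>) + l * \<sigma> * (\<Sum>i\<in>H. sgn (z $ i)) = 0"
    using reduced_solution_level_probe[OF z, of sgn "\<lambda>v. v \<noteq> z $ j"] a
    unfolding H_def \<sigma>_def by (simp add: sgn_minus sgn_times)
  show "\<alpha> * (\<Sum>i\<in>H. (z $ i)\<^sup>2) + l * \<sigma> * (\<Sum>i\<in>H. z $ i) = 0"
    using reduced_solution_level_probe[OF z, of "\<lambda>y. y" "\<lambda>v. v \<noteq> z $ j"] a
    unfolding H_def \<sigma>_def by (simp add: power2_eq_square)
  have split: "(\<Sum>i\<in>UNIV. f i) = (\<Sum>i\<in>G. f i) + (\<Sum>i\<in>H. f i)" for f :: "'n \<Rightarrow> real"
  proof -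
    have "G \<union> H = UNIV" "G \<inter> H = {}" unfolding G_def H_def by auto
    then show ?thesis using sum.union_disjoint[of G H f] by simp
  qed
  have "(\<Sum>i\<in>G. z $ i) = (\<Sum>i\<in>G. z $ j * sgn (z $ i))"
    unfolding G_def by (intro sum.cong) (auto simp: sgn_real_def)
  then show "\<sigma> = z $ j * (\<Sum>i\<in>G. sgn (z $ i)) + (\<Sum>i\<in>H. z $ i)"
    unfolding \<sigma>_def split[of "\<lambda>i. z $ i"] by (simp add: sum_distrib_left)
  show "(\<Sum>i\<in>UNIV. \<bar>z $ i\<bar>) = real (card G) * z $ j + (\<Sum>i\<in>H. \<bar>z $ i\<bar>)"
    unfolding split[of "\<lambda>i. \<bar>z $ i\<bar>"] G_def by simp
qed

lemma reduced_solution_single_top: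
  fixes z :: "real^'n"
  assumes sl: "signless_laplacian P" and P0: "P \<noteq> 0"
    and z: "reduced_solution P \<alpha> l j z" and a: "z $ j > 0"
    and single: "card {i. \<bar>z $ i\<bar> = z $ j} < 2"
  defines "H \<equiv> {i. \<bar>z $ i\<bar> \<noteq> z $ j}"
  shows "{i. \<bar>z $ i\<bar> = z $ j} = {j}"
    and "\<bar>\<Sum>i\<in>H. sgn (z $ i)\<bar> \<le> real (card H) - 1"
proof -
  have j: "j \<in> {i. \<bar>z $ i\<bar> = z $ j}" using a by simp
  then have "card {i. \<bar>z $ i\<bar> = z $ j} \<noteq> 0" by auto
  then have "card {i. \<bar>z $ i\<bar> = z $ j} = 1" using single by linarith
  then obtain x where "{i. \<bar>z $ i\<bar> = z $ j} = {x}" by (rule card_1_singletonE)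
  then show top: "{i. \<bar>z $ i\<bar> = z $ j} = {j}" using j by simp
  have top_iff: "\<bar>z $ x\<bar> = z $ j \<longleftrightarrow> x = j" for x
  proof -
    have "x \<in> {i. \<bar>z $ i\<bar> = z $ j} \<longleftrightarrow> x \<in> {j}" by (simp only: top)
    then show ?thesis by simp
  qed
  have "z \<in> sl_kernel P" using z unfolding reduced_solution_def by simp
  then have "(\<exists>i. z $ i = 0) \<or> (\<exists>i k. i \<noteq> k \<and> z $ k = - z $ i)"
    by (rule sl_kernel_nonzero_witness[OF sl P0])
  then consider i where "z $ i = 0" | i k where "i \<noteq> k" "z $ k = - z $ i"
    by blast
  then have "(\<exists>i\<in>H. z $ i = 0) \<or> (\<exists>i\<in>H. \<exists>k\<in>H. i \<noteq> k \<and> z $ k = - z $ i)"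
  proof cases
    case (1 i)
    then have "i \<in> H" using a unfolding H_def by simp
    then show ?thesis using 1 by blast
  next
    case (2 i k)
    have "\<bar>z $ k\<bar> = \<bar>z $ i\<bar>" using 2(2) by simp
    then have "i \<in> H" "k \<in> H" using 2(1) top_iff[of i] top_iff[of k] unfolding H_def by auto
    then show ?thesis using 2 by blast
  qed
  then show "\<bar>\<Sum>i\<in>H. sgn (z $ i)\<bar> \<le> real (card H) - 1"
    by (intro sum_sgn_abs_defect) simp_all
qed

lemma reduced_solution_l1_bound_pos:
  fixes P :: "real^'n^'n" and z :: "real^'n"
  assumes sl: "signless_laplacian P" and P0: "P \<noteq> 0" and n3: "real CARD('n) \<ge> 3"
    and l: "l > 0" and al: "\<alpha> \<ge> (real CARD('n) - 2) * l"
    and z: "reduced_solution P \<alpha> l j z" and a: "z $ j > 0"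
  shows "(\<Sum>i\<in>UNIV. \<bar>z $ i\<bar>) < 1 / \<alpha> + l * (real CARD('n) - 2) / (\<alpha> * (\<alpha> + l * real CARD('n)))"
proof -
  define n where "n = real CARD('n)"
  have "(n - 2) * l > 0" "l * n > 0" using n3 l unfolding n_def by simp_all
  then have \<alpha>: "\<alpha> > 0" and denom_pos: "\<alpha> + l * n > 0" using al unfolding n_def by linarith+
  define G where "G = {i. \<bar>z $ i\<bar> = z $ j}"
  define H where "H = {i. \<bar>z $ i\<bar> \<noteq> z $ j}"
  define \<sigma> where "\<sigma> = (\<Sum>i\<in>UNIV. z $ i)"
  note levels = reduced_solution_levels[OF z a, folded G_def H_def \<sigma>_def]
  have "card G + card H = CARD('n)"
    by (subst card_Un_disjoint[symmetric]) (auto simp: G_def H_def intro: arg_cong[where f = card])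
  then have nd: "n = real (card G) + real (card H)" unfolding n_def by simp
  have "j \<in> G" using a unfolding G_def by simp
  then have c1: "real (card G) \<ge> 1" by (auto simp: Suc_le_eq card_gt_0_iff)
  have D: "real (card H) = 0 \<or> real (card H) \<ge> 1" by (cases "card H") auto
  have single: "real (card G) = 1 \<and> (\<Sum>i\<in>G. sgn (z $ i)) = 1
      \<and> \<bar>\<Sum>i\<in>H. sgn (z $ i)\<bar> \<le> real (card H) - 1" if "real (card G) < 2"
  proof -
    have "card G < 2" using that by simp
    then have "G = {j}" and "\<bar>\<Sum>i\<in>H. sgn (z $ i)\<bar> \<le> real (card H) - 1"
      using reduced_solution_single_top[OF sl P0 z a] unfolding G_def H_def by blast+
    then show ?thesis using a by simp
  qed
  have cauchy_schwarz: "(\<Sum>i\<in>H. \<bar>z $ i\<bar>)\<^sup>2 \<le> real (card H) * (\<Sum>i\<in>H. (z $ i)\<^sup>2)"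
    using Cauchy_Schwarz_ineq_sum[of "\<lambda>_. 1" "\<lambda>i. \<bar>z $ i\<bar>" H] by simp
  have "(\<alpha> + l * n) * (- \<sigma> * (\<Sum>i\<in>H. sgn (z $ i)) - \<sigma> * (\<Sum>i\<in>G. sgn (z $ i))) < n - 2"
    by (rule level_estimate[OF nd _ c1 D l _ a sum_sgn_abs_le_card sum_sgn_abs_le_card
          cauchy_schwarz sum_abs levels(4,1,2,3) single])
       (use n3 al in \<open>simp_all add: n_def\<close>)
  moreover have "\<alpha> * (\<Sum>i\<in>UNIV. \<bar>z $ i\<bar>)
      = 1 + l * (- \<sigma> * (\<Sum>i\<in>H. sgn (z $ i)) - \<sigma> * (\<Sum>i\<in>G. sgn (z $ i)))"
    using levels(1,2,5) by (simp add: algebra_simps)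
  ultimately show ?thesis
    using l1_bound_from_estimate[OF \<alpha> l denom_pos] unfolding n_def by blast
qed

text \<open>The diagonal entry \<open>z\<^sub>j\<close> is nonnegative, and \<open>z = 0\<close> if it vanishes.\<close>
lemma reduced_solution_l1_bound:
  fixes P :: "real^'n^'n" and z :: "real^'n"
  assumes sl: "signless_laplacian P" and P0: "P \<noteq> 0" and n3: "real CARD('n) \<ge> 3"
    and l: "l > 0" and al: "\<alpha> \<ge> (real CARD('n) - 2) * l"
    and z: "reduced_solution P \<alpha> l j z"
  shows "(\<Sum>i\<in>UNIV. \<bar>z $ i\<bar>) < 1 / \<alpha> + l * (real CARD('n) - 2) / (\<alpha> * (\<alpha> + l * real CARD('n)))"
proof -
  have "(real CARD('n) - 2) * l > 0" using n3 l by simp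
  then have \<alpha>: "\<alpha> > 0" using al by linarith
  have "z $ j \<ge> 0" using reduced_solution_diag(1)[OF z \<alpha>] l by simp
  then consider (zero) "z $ j = 0" | (pos) "z $ j > 0" by linarith
  then show ?thesis
  proof cases
    case zero
    then have "z = 0" using reduced_solution_diag(2)[OF z \<alpha>] l by simp
    moreover have "l * (real CARD('n) - 2) / (\<alpha> * (\<alpha> + l * real CARD('n))) \<ge> 0"
      using l n3 \<alpha> by simp
    ultimately show ?thesis using \<alpha> by (simp add: add_pos_nonneg)
  next
    case pos
    then show ?thesis by (rule reduced_solution_l1_bound_pos[OF sl P0 n3 l al z])
  qed
qed

lemma inf_norm_less:
  assumes "\<And>i. (\<Sum>j\<in>UNIV. \<bar>A $ i $ j\<bar>) < b"
  shows "inf_norm A < b"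
  unfolding inf_norm_def using assms by (subst Max_less_iff) auto

text \<open>For \<open>P \<noteq> 0\<close> the limit matrix, whose columns are reduced solutions, has norm below the bound;
  by symmetry of the limit its rows are its columns.\<close>
lemma limit_inf_norm_less:
  fixes P L :: "real^'n^'n"
  assumes sl: "signless_laplacian P" and P0: "P \<noteq> 0" and n3: "real CARD('n) \<ge> 3"
    and l: "l > 0" and al: "\<alpha> \<ge> (real CARD('n) - 2) * l"
    and cols: "\<And>j. reduced_solution P \<alpha> l j (column j L)"
  shows "inf_norm L < 1 / \<alpha> + l * (real CARD('n) - 2) / (\<alpha> * (\<alpha> + l * real CARD('n)))"
proof (rule inf_norm_less)
  fix i
  have "L $ i $ j = column i L $ j" for j
    using reduced_solution_symmetric[OF cols[of i] cols[of j]] by (simp add: column_def)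
  then show "(\<Sum>j\<in>UNIV. \<bar>L $ i $ j\<bar>) < 1 / \<alpha> + l * (real CARD('n) - 2) / (\<alpha> * (\<alpha> + l * real CARD('n)))"
    using reduced_solution_l1_bound[OF sl P0 n3 l al cols[of i]] by simp
qed

subsection \<open>The inverse of \<open>S = \<alpha> I + l \<one>\<one>\<^sup>T\<close>\<close>

lemma S_times:
  "((\<alpha> *\<^sub>R mat 1 + l *\<^sub>R ones_mat) ** B) $ i $ k = \<alpha> * B $ i $ k + l * (\<Sum>j\<in>UNIV. B $ j $ k)"
  for B :: "real^'n^'n"
proof -
  have "((\<alpha> *\<^sub>R mat 1 + l *\<^sub>R ones_mat) ** B) $ i $ k
      = (\<Sum>j\<in>UNIV. (if i = j then \<alpha> * B $ j $ k else 0) + l * B $ j $ k)"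
    unfolding matrix_matrix_mult_def
    by (auto intro!: sum.cong simp: mat_def ones_mat_def algebra_simps)
  then show ?thesis by (simp add: sum.distrib sum_distrib_left)
qed

text \<open>Sherman--Morrison: \<open>S\<^sup>-\<^sup>1 = I/\<alpha> - c \<one>\<one>\<^sup>T\<close> with \<open>c = l / (\<alpha> (\<alpha> + l n))\<close>.\<close>
lemma matrix_inv_S:
  fixes \<alpha> l :: real
  assumes \<alpha>: "\<alpha> > 0" and l: "l \<ge> 0"
  shows "matrix_inv (\<alpha> *\<^sub>R mat 1 + l *\<^sub>R ones_mat :: real^'n^'n)
    = (1 / \<alpha>) *\<^sub>R mat 1 - (l / (\<alpha> * (\<alpha> + l * real CARD('n)))) *\<^sub>R ones_mat"
proof -
  define n where "n = real CARD('n)"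
  define c where "c = l / (\<alpha> * (\<alpha> + l * n))"
  have pos: "\<alpha> + l * n > 0" using \<alpha> l unfolding n_def by (simp add: add_pos_nonneg)
  have "c * (\<alpha> + l * n) = (l * (\<alpha> + l * n)) / (\<alpha> * (\<alpha> + l * n))"
    unfolding c_def by simp
  also have "\<dots> = l / \<alpha>"
    using pos by (intro nonzero_mult_divide_mult_cancel_right) simp
  finally have c: "c * (\<alpha> + l * n) = l / \<alpha>" .
  have entry: "((1 / \<alpha>) *\<^sub>R mat 1 - c *\<^sub>R ones_mat :: real^'n^'n) $ j $ k
      = (if j = k then 1 / \<alpha> else 0) - c" for j k
    by (simp add: mat_def ones_mat_def)
  have col_sum: "(\<Sum>j\<in>UNIV. ((1 / \<alpha>) *\<^sub>R mat 1 - c *\<^sub>R ones_mat :: real^'n^'n) $ j $ k)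
      = 1 / \<alpha> - n * c" for k
    unfolding entry by (simp add: sum_subtractf n_def)
  have "(\<alpha> *\<^sub>R mat 1 + l *\<^sub>R ones_mat) ** ((1 / \<alpha>) *\<^sub>R mat 1 - c *\<^sub>R ones_mat) = (mat 1 :: real^'n^'n)"
    unfolding vec_eq_iff S_times col_sum unfolding entry using \<alpha> c by (simp add: mat_def algebra_simps)
  then show ?thesis unfolding c_def n_def by (rule matrix_inv_eqI)
qed

text \<open>The row sums of \<open>S\<^sup>-\<^sup>1\<close> are \<open>(1/\<alpha> - c) + (n - 1) c\<close>, giving the value in the theorem.\<close>
lemma inf_norm_S_inverse:
  fixes \<alpha> l :: real
  assumes \<alpha>: "\<alpha> > 0" and l: "l \<ge> 0"
  shows "inf_norm (matrix_inv (\<alpha> *\<^sub>R mat 1 + l *\<^sub>R ones_mat :: real^'n^'n))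
    = 1 / \<alpha> + l * (real CARD('n) - 2) / (\<alpha> * (\<alpha> + l * real CARD('n)))"
proof -
  define n where "n = real CARD('n)"
  define c where "c = l / (\<alpha> * (\<alpha> + l * n))"
  have pos: "\<alpha> + l * n > 0" using \<alpha> l unfolding n_def by (simp add: add_pos_nonneg)
  have "n \<ge> 1" unfolding n_def by (simp add: Suc_le_eq)
  then have "l * 1 \<le> l * n" using l by (intro mult_left_mono) auto
  then have "l / (\<alpha> + l * n) < 1" using \<alpha> pos by simp
  then have "(l / (\<alpha> + l * n)) / \<alpha> < 1 / \<alpha>" using \<alpha> by (rule divide_strict_right_mono)
  moreover have "c = (l / (\<alpha> + l * n)) / \<alpha>"
    unfolding c_def by (simp add: divide_divide_eq_left mult.commute)
  moreover have "c \<ge> 0" unfolding c_def using \<alpha> l pos by simp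
  ultimately have c: "0 \<le> c" "c < 1 / \<alpha>" by simp_all
  let ?B = "(1 / \<alpha>) *\<^sub>R mat 1 - c *\<^sub>R ones_mat :: real^'n^'n"
  have row: "(\<Sum>j\<in>UNIV. \<bar>?B $ i $ j\<bar>) = 1 / \<alpha> + (n - 2) * c" for i
  proof -
    have "(\<Sum>j\<in>UNIV. \<bar>?B $ i $ j\<bar>) = \<bar>?B $ i $ i\<bar> + (\<Sum>j\<in>UNIV - {i}. \<bar>?B $ i $ j\<bar>)"
      by (subst sum.remove[of UNIV i]) auto
    also have "(\<Sum>j\<in>UNIV - {i}. \<bar>?B $ i $ j\<bar>) = (\<Sum>j\<in>UNIV - {i}. c)"
      by (intro sum.cong) (use c in \<open>auto simp: mat_def ones_mat_def\<close>)
    also have "\<dots> = (n - 1) * c"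
      unfolding n_def by (simp add: card_Diff_singleton of_nat_diff Suc_le_eq)
    also have "\<bar>?B $ i $ i\<bar> = 1 / \<alpha> - c" using c by (simp add: mat_def ones_mat_def)
    finally show ?thesis by (simp add: algebra_simps)
  qed
  have "range (\<lambda>i. \<Sum>j\<in>UNIV. \<bar>?B $ i $ j\<bar>) = {1 / \<alpha> + (n - 2) * c}"
    unfolding row by auto
  then show ?thesis
    unfolding matrix_inv_S[OF \<alpha> l] inf_norm_def c_def n_def by (simp add: mult.commute)
qed

theorem corollary4p11:
  fixes \<alpha> l :: real and P :: "real^'n^'n"
  assumes "CARD('n) \<ge> 3"
    and "l > 0"
    and "\<alpha> \<ge> (real CARD('n) - 2) * l"
    and "signless_laplacian P"
  defines "S \<equiv> \<alpha> *\<^sub>R mat 1 + l *\<^sub>R ones_mat"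
  shows "\<exists>L. ((\<lambda>t::real. matrix_inv (S + t *\<^sub>R P)) \<longlongrightarrow> L) at_top \<and>
             inf_norm L \<le> inf_norm (matrix_inv S) \<and>
             inf_norm (matrix_inv S) =
               1 / \<alpha> + l * (real CARD('n) - 2) / (\<alpha> * (\<alpha> + l * real CARD('n))) \<and>
             (inf_norm L = inf_norm (matrix_inv S) \<longleftrightarrow> P = 0)"
proof -
  note sl = assms(4)
  have n3: "real CARD('n) \<ge> 3" using assms(1) by simp
  have "(real CARD('n) - 2) * l > 0" using n3 assms(2) by simp
  then have \<alpha>: "\<alpha> > 0" using assms(3) by linarith
  have l: "l \<ge> 0" using assms(2) by simp
  have pencil_S: "S + t *\<^sub>R P = pencil \<alpha> l t P" for t
    unfolding S_def pencil_def ..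
  obtain L where lim: "((\<lambda>t. matrix_inv (S + t *\<^sub>R P)) \<longlongrightarrow> L) at_top"
    and cols: "\<And>j. reduced_solution P \<alpha> l j (column j L)"
    using pencil_inverse_limit[OF sl \<alpha> l] unfolding pencil_S by blast
  have norm_S: "inf_norm (matrix_inv S) = 1 / \<alpha> + l * (real CARD('n) - 2) / (\<alpha> * (\<alpha> + l * real CARD('n)))"
    unfolding S_def by (rule inf_norm_S_inverse[OF \<alpha> l])
  show ?thesis
  proof (cases "P = 0")
    case True
    then have "L = matrix_inv S"
      using tendsto_unique[OF _ lim] by simp
    then show ?thesis using lim norm_S True by blast
  next
    case False
    then have "inf_norm L < inf_norm (matrix_inv S)"
      using limit_inf_norm_less[OF sl False n3 assms(2,3) cols] norm_S by simp
    then show ?thesis using lim norm_S False by auto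
  qed
qed

end
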